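(* Let $\mathcal{A}$ be a strong $T_0$-family and let $\|x\|_{2,\mathcal{A}}=\|x\|_2+\|x\|_\mathcal{A}$ for $x\in\ell_2(\omega_1)$. Then the space $(\ell_2(\omega_1),\|\cdot\|_{2,\mathcal{A}})$ does not contain any uncountable equilateral set.
   Context: $\|\cdot\|_2$ is the Hilbert norm of $\ell_2(\omega_1)$ and $\|x\|_\mathcal{A}=\sup_{A\in\mathcal{A}}\sqrt{\sum_{\alpha\in A}x(\alpha)^2}$; $\|\cdot\|_{2,\mathcal{A}}$ is an equivalent norm on $\ell_2(\omega_1)$. A set $\mathcal{Y}$ is equilateral if there is $\delta>0$ with $\|y-y'\|=\delta$ for all distinct $y,y'\in\mathcal{Y}$. For disjoint $A,B$, $A\otimes B=\{\{\alpha,\beta\}:\alpha\in A,\beta\in B\}$. A function $c=(c_0,c_1):[\omega_1]^2\to I\times J$ ($0,1\in I$, $J\ne\emptyset$) is a $T$-coloring if for every uncountable pairwise disjoint family $\{\{a_\xi(0),a_\xi(1)\}:\xi<\omega_1\}$ of pairs and all $(i_0,j_0),(i_1,j_1)\in I\times J$ there are $\xi<\eta$ with $c(\{a_\xi(0),a_\eta(0)\})=(i_0,j_0)$, $c(\{a_\xi(1),a_\eta(1)\})=(i_1,j_1)$; it is a strong $T$-coloring if moreover for every uncountable pairwise disjoint family $\{A_\xi:\xi<\omega_1\}$ of finite subsets of $\omega_1$ there are $\xi<\eta$ with $c_0[A_\xi\otimes A_\eta]=\{0\}$ and $\xi<\eta$ with $c_0[A_\xi\otimes A_\eta]=\{1\}$.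 A strong $T_0$-family is $\mathcal{A}_c=\{a\subseteq\omega_1\text{ finite}:c_0[[a]^2]\subseteq\{0\}\}$ for a strong $T$-coloring $c$. *)

theory Defs
  imports "HOL-Analysis.Analysis"
begin

text \<open>The index type 'a plays the role of omega_1: an uncountable well-order all of
whose proper initial segments are countable.\<close>
definition omega1_like :: "'a::wellorder itself \<Rightarrow> bool" where
  "omega1_like _ \<longleftrightarrow> \<not> countable (UNIV :: 'a set) \<and> (\<forall>\<alpha>::'a. countable {\<beta>. \<beta> < \<alpha>})"

definition pairs2 :: "'a set \<Rightarrow> 'a set set" where
  "pairs2 S = {p. p \<subseteq> S \<and> card p = 2}"

definition otimes :: "'a set \<Rightarrow> 'a set \<Rightarrow> 'a set set" where
  "otimes A B = {{\<alpha>, \<beta>} | \<alpha> \<beta>. \<alpha> \<in> A \<and> \<beta> \<in> B}"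

definition T_coloring ::
  "('a::wellorder set \<Rightarrow> 'i::zero_neq_one \<times> 'j) \<Rightarrow> 'i set \<Rightarrow> 'j set \<Rightarrow> bool" where
  "T_coloring c I J \<longleftrightarrow>
     0 \<in> I \<and> 1 \<in> I \<and> J \<noteq> {} \<and>
     (\<forall>p \<in> pairs2 (UNIV :: 'a set). c p \<in> I \<times> J) \<and>
     (\<forall>a0 a1 :: 'a \<Rightarrow> 'a.
        (\<forall>\<xi>. a0 \<xi> \<noteq> a1 \<xi>) \<and>
        (\<forall>\<xi> \<eta>. \<xi> \<noteq> \<eta> \<longrightarrow> {a0 \<xi>, a1 \<xi>} \<inter> {a0 \<eta>, a1 \<eta>} = {}) \<longrightarrow>
        (\<forall>i0 \<in> I. \<forall>j0 \<in> J. \<forall>i1 \<in> I. \<forall>j1 \<in> J.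
           \<exists>\<xi> \<eta>. \<xi> < \<eta> \<and> c {a0 \<xi>, a0 \<eta>} = (i0, j0) \<and> c {a1 \<xi>, a1 \<eta>} = (i1, j1)))"

definition strong_T_coloring ::
  "('a::wellorder set \<Rightarrow> 'i::zero_neq_one \<times> 'j) \<Rightarrow> 'i set \<Rightarrow> 'j set \<Rightarrow> bool" where
  "strong_T_coloring c I J \<longleftrightarrow>
     T_coloring c I J \<and>
     (\<forall>A :: 'a \<Rightarrow> 'a set.
        (\<forall>\<xi>. finite (A \<xi>) \<and> A \<xi> \<noteq> {}) \<and>
        (\<forall>\<xi> \<eta>. \<xi> \<noteq> \<eta> \<longrightarrow> A \<xi> \<inter> A \<eta> = {}) \<longrightarrow>
        (\<exists>\<xi> \<eta>. \<xi> < \<eta> \<and> (fst \<circ> c) ` otimes (A \<xi>) (A \<eta>) = {0}) \<and>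
        (\<exists>\<xi> \<eta>. \<xi> < \<eta> \<and> (fst \<circ> c) ` otimes (A \<xi>) (A \<eta>) = {1}))"

definition T0_family :: "('a set \<Rightarrow> 'i::zero_neq_one \<times> 'j) \<Rightarrow> 'a set set" where
  "T0_family c = {a. finite a \<and> (fst \<circ> c) ` pairs2 a \<subseteq> {0}}"

definition l2 :: "('a \<Rightarrow> real) set" where
  "l2 = {x. (\<lambda>\<alpha>. (x \<alpha>)\<^sup>2) summable_on UNIV}"

definition norm2 :: "('a \<Rightarrow> real) \<Rightarrow> real" where
  "norm2 x = sqrt (infsum (\<lambda>\<alpha>. (x \<alpha>)\<^sup>2) UNIV)"

definition normA :: "'a set set \<Rightarrow> ('a \<Rightarrow> real) \<Rightarrow> real" where
  "normA \<A> x = (SUP A\<in>\<A>. sqrt (\<Sum>\<alpha>\<in>A. (x \<alpha>)\<^sup>2))"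

definition norm2A :: "'a set set \<Rightarrow> ('a \<Rightarrow> real) \<Rightarrow> real" where
  "norm2A \<A> x = norm2 x + normA \<A> x"

definition equilateral :: "(('a \<Rightarrow> real) \<Rightarrow> real) \<Rightarrow> ('a \<Rightarrow> real) set \<Rightarrow> bool" where
  "equilateral N Y \<longleftrightarrow> (\<exists>\<delta>>0. \<forall>y\<in>Y. \<forall>y'\<in>Y. y \<noteq> y' \<longrightarrow> N (y - y') = \<delta>)"

end

theory Submission
  imports Defs
begin

text \<open>Suppose \<open>Y\<close> were an uncountable \<open>\<delta>\<close>-equilateral set. If all of its vectors
  vanish outside a common countable set, then countably many choices of a finite root
  carrying almost all the mass, together with a grid on that root, force two
  elements of \<open>Y\<close> to be close in both norms. Otherwise some level \<open>r > 0\<close> is exceeded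
  at uncountably many coordinates, so uncountably many \<open>y\<close> have a coordinate
  \<open>\<alpha> y\<close> with \<open>\<bar>y (\<alpha> y)\<bar> \<ge> r\<close>. A Delta-system argument and pigeonholing yield
  uncountably many \<open>y\<close> that almost agree on a common finite root and have pairwise
  disjoint private parts \<open>A y \<ni> \<alpha> y\<close> of almost the same \<open>\<ell>\<^sub>2\<close>-mass \<open>s\<close> and
  \<open>\<A>\<close>-mass \<open>m \<ge> r\<close>. For two of them, \<open>\<parallel>y - y'\<parallel>\<^sub>2 \<approx> \<surd>2 s\<close>, while
  \<open>\<parallel>y - y'\<parallel>\<^sub>\<A> \<approx> \<surd>2 m\<close> if the colour between their private parts is 0
  and at most about \<open>m\<close> if it is 1. The strong \<open>T\<close>-colouring provides pairs of both kinds, so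
  the distances cannot all be equal.\<close>

definition restrict_zero :: "('a \<Rightarrow> 'b::zero) \<Rightarrow> 'a set \<Rightarrow> 'a \<Rightarrow> 'b" where
  "restrict_zero f A = (\<lambda>a. if a \<in> A then f a else 0)"

lemma L2_set_restrict_zero:
  assumes "finite G"
  shows "L2_set (restrict_zero f A) G = L2_set f (G \<inter> A)"
proof -
  have "(\<Sum>a\<in>G. (restrict_zero f A a)\<^sup>2) = (\<Sum>a\<in>G. if a \<in> A then (f a)\<^sup>2 else 0)"
    by (rule sum.cong) (auto simp: restrict_zero_def)
  also have "\<dots> = (\<Sum>a\<in>G \<inter> A. (f a)\<^sup>2)"
    using assms by (simp add: sum.inter_restrict)
  finally show ?thesis
    unfolding L2_set_def by simp
qed

lemma L2_set_subset_le:
  assumes "finite B" "A \<subseteq> B"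
  shows "L2_set f A \<le> L2_set f B"
  unfolding L2_set_def using assms by (intro real_sqrt_le_mono sum_mono2) auto

lemma L2_set_le_support:
  assumes "finite S" "\<And>a. a \<notin> S \<Longrightarrow> f a = 0"
  shows "L2_set f B \<le> L2_set f S"
proof (cases "finite B")
  case True
  have "restrict_zero f S = f"
    using assms(2) by (auto simp: restrict_zero_def)
  then have "L2_set f B = L2_set f (B \<inter> S)"
    using L2_set_restrict_zero[OF True, of f S] by simp
  also have "\<dots> \<le> L2_set f S"
    using assms(1) by (rule L2_set_subset_le) auto
  finally show ?thesis .
qed simp

lemma L2_set_uminus [simp]: "L2_set (\<lambda>a. - f a) A = L2_set f A"
  unfolding L2_set_def by simp

lemma L2_set_Un_disjoint:
  assumes "finite A" "finite B" "A \<inter> B = {}"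
  shows "L2_set f (A \<union> B) = sqrt ((L2_set f A)\<^sup>2 + (L2_set f B)\<^sup>2)"
  using assms by (simp add: L2_set_def sum.union_disjoint sum_nonneg)

lemma L2_set_add_diff_le:
  "\<bar>L2_set (\<lambda>a. f a + g a) G - L2_set f G\<bar> \<le> L2_set g G"
proof -
  have "L2_set f G \<le> L2_set (\<lambda>a. f a + g a) G + L2_set (\<lambda>a. - g a) G"
    using L2_set_triangle_ineq[of "\<lambda>a. f a + g a" "\<lambda>a. - g a" G] by simp
  then show ?thesis
    using L2_set_triangle_ineq[of f g G] by simp
qed

definition concentrated_on :: "('a \<Rightarrow> real) \<Rightarrow> 'a set \<Rightarrow> real \<Rightarrow> bool" where
  "concentrated_on y F e \<longleftrightarrow> finite F \<and> (\<forall>G. finite G \<longrightarrow> G \<inter> F = {} \<longrightarrow> L2_set y G \<le> e)"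

lemma concentrated_onD:
  assumes "concentrated_on y F e" "finite G"
  shows "L2_set y (G - F) \<le> e"
  using assms unfolding concentrated_on_def by auto

lemma concentrated_on_mono:
  "concentrated_on y F e \<Longrightarrow> F \<subseteq> F' \<Longrightarrow> finite F' \<Longrightarrow> concentrated_on y F' e"
  unfolding concentrated_on_def by blast

lemma l2_concentrated_on_finite:
  assumes "y \<in> l2" "e > 0"
  shows "\<exists>F. concentrated_on y F e"
proof -
  let ?f = "\<lambda>a. (y a)\<^sup>2"
  have sm: "?f summable_on UNIV"
    using assms(1) unfolding l2_def by simp
  define S where "S = infsum ?f UNIV"
  have le_S: "sum ?f F \<le> S" if "finite F" for F
    unfolding S_def using finite_sum_le_infsum[OF sm that] by auto
  have "S = (SUP F\<in>{F. finite F \<and> F \<subseteq> UNIV}. sum ?f F)"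
    unfolding S_def by (rule infsum_nonneg_is_SUPREMUM_real[OF sm]) auto
  then have "S - e\<^sup>2 < (SUP F\<in>{F. finite F \<and> F \<subseteq> UNIV}. sum ?f F)"
    using assms(2) by simp
  then obtain F where F: "finite F" "S - e\<^sup>2 < sum ?f F"
    by (subst (asm) less_cSUP_iff) (auto intro!: bdd_aboveI2[where M=S] le_S)
  have "L2_set y G \<le> e" if G: "finite G" "G \<inter> F = {}" for G
  proof -
    have "F \<inter> G = {}"
      using G(2) by blast
    then have "sum ?f F + sum ?f G \<le> S"
      using le_S[of "F \<union> G"] F(1) G(1) by (simp add: sum.union_disjoint)
    then have "sum ?f G \<le> e\<^sup>2"
      using F(2) by linarith
    then show ?thesis
      using assms(2) real_sqrt_le_mono unfolding L2_set_def by fastforce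
  qed
  with F(1) show ?thesis
    unfolding concentrated_on_def by blast
qed

lemma l2_choose_concentrated:
  assumes "Y \<subseteq> l2" "e > 0"
  obtains F where "\<And>y. y \<in> Y \<Longrightarrow> concentrated_on y (F y) e"
proof -
  have "\<forall>y\<in>Y. \<exists>F. concentrated_on y F e"
    using l2_concentrated_on_finite assms by blast
  then show ?thesis
    using that by metis
qed

lemma concentrated_on_Int_support:
  assumes "concentrated_on y F e" "\<And>a. a \<notin> S \<Longrightarrow> y a = 0"
  shows "concentrated_on y (F \<inter> S) e"
  unfolding concentrated_on_def
proof (intro conjI allI impI)
  show "finite (F \<inter> S)"
    using assms(1) unfolding concentrated_on_def by blast
  fix G assume G: "finite G" "G \<inter> (F \<inter> S) = {}"
  have "restrict_zero y S = y"
    using assms(2) by (auto simp: restrict_zero_def)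
  then have "L2_set y G = L2_set y (G \<inter> S - F)"
    using L2_set_restrict_zero[OF G(1), of y S] G(2) by (metis Diff_triv Int_assoc Int_commute)
  also have "\<dots> \<le> e"
    using concentrated_onD[OF assms(1)] G(1) by blast
  finally show "L2_set y G \<le> e" .
qed

lemma l2_finite_large_coordinates:
  assumes "y \<in> l2" "r > 0"
  shows "finite {a. r \<le> \<bar>y a\<bar>}"
proof -
  obtain F where F: "concentrated_on y F (r / 2)"
    using l2_concentrated_on_finite[OF assms(1)] assms(2) by fastforce
  have "a \<in> F" if "r \<le> \<bar>y a\<bar>" for a
  proof (rule ccontr)
    assume "a \<notin> F"
    then have "{a} - F = {a}"
      by blast
    then have "\<bar>y a\<bar> \<le> r / 2"
      using concentrated_onD[OF F, of "{a}"] by simp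
    with that assms(2) show False by simp
  qed
  then have "{a. r \<le> \<bar>y a\<bar>} \<subseteq> F"
    by blast
  with F show ?thesis
    unfolding concentrated_on_def using finite_subset by blast
qed

lemma support_subset_large_coordinates:
  fixes Y :: "('a \<Rightarrow> real) set"
  shows "{a. \<exists>y\<in>Y. y a \<noteq> 0} \<subseteq> (\<Union>n. {a. \<exists>y\<in>Y. 1 / Suc n \<le> \<bar>y a\<bar>})"
proof
  fix a assume "a \<in> {a. \<exists>y\<in>Y. y a \<noteq> 0}"
  then obtain y where "y \<in> Y" "0 < \<bar>y a\<bar>"
    by auto
  moreover obtain n where "inverse (real (Suc n)) < \<bar>y a\<bar>"
    using reals_Archimedean[OF \<open>0 < \<bar>y a\<bar>\<close>] by blast
  ultimately show "a \<in> (\<Union>n. {a. \<exists>y\<in>Y. 1 / Suc n \<le> \<bar>y a\<bar>})"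
    by (auto simp: inverse_eq_divide intro: less_imp_le)
qed

lemma sum_power2_le_if_L2_set_le:
  assumes "L2_set w G \<le> M"
  shows "(\<Sum>a\<in>G. (w a)\<^sup>2) \<le> M\<^sup>2"
proof -
  have "(L2_set w G)\<^sup>2 \<le> M\<^sup>2"
    using assms by (intro power_mono) auto
  then show ?thesis
    unfolding L2_set_def by (simp add: sum_nonneg)
qed

lemma square_summable_if_L2_set_bounded:
  assumes "\<And>G. finite G \<Longrightarrow> L2_set w G \<le> M"
  shows "(\<lambda>a. (w a)\<^sup>2) summable_on UNIV"
  using assms
  by (intro nonneg_bdd_above_summable_on)
    (auto intro!: bdd_aboveI2[where M="M\<^sup>2"] sum_power2_le_if_L2_set_le)

lemma norm2_le:
  assumes "\<And>G. finite G \<Longrightarrow> L2_set w G \<le> M"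
  shows "norm2 w \<le> M"
proof -
  have "0 \<le> M"
    using assms[of "{}"] by simp
  have "infsum (\<lambda>a. (w a)\<^sup>2) UNIV \<le> M\<^sup>2"
    using assms
    by (intro infsum_le_finite_sums square_summable_if_L2_set_bounded[OF assms]
        sum_power2_le_if_L2_set_le) auto
  then have "norm2 w \<le> sqrt (M\<^sup>2)"
    unfolding norm2_def by (rule real_sqrt_le_mono)
  with \<open>0 \<le> M\<close> show ?thesis
    by simp
qed

lemma L2_set_le_norm2:
  assumes "\<And>G. finite G \<Longrightarrow> L2_set w G \<le> M" "finite G"
  shows "L2_set w G \<le> norm2 w"
  unfolding norm2_def L2_set_def
  by (intro real_sqrt_le_mono finite_sum_le_infsum
      square_summable_if_L2_set_bounded[OF assms(1)] assms(2)) auto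

lemma normA_eq_SUP: "normA \<A> x = (SUP A\<in>\<A>. L2_set x A)"
  unfolding normA_def L2_set_def ..

lemma normA_le:
  assumes "\<A> \<noteq> {}" "\<And>b. b \<in> \<A> \<Longrightarrow> L2_set w b \<le> M"
  shows "normA \<A> w \<le> M"
  unfolding normA_eq_SUP using assms by (rule cSUP_least)

lemma L2_set_le_normA:
  assumes "\<And>b. b \<in> \<A> \<Longrightarrow> L2_set w b \<le> M" "b \<in> \<A>"
  shows "L2_set w b \<le> normA \<A> w"
  unfolding normA_eq_SUP using assms by (intro cSUP_upper bdd_aboveI2) auto

lemma L2_set_le_normA_finite:
  assumes "finite \<A>" "b \<in> \<A>"
  shows "L2_set w b \<le> normA \<A> w"
  unfolding normA_eq_SUP using assms by (intro cSUP_upper bdd_above_finite) auto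

lemma normA_finite_attained:
  assumes "finite \<A>" "\<A> \<noteq> {}"
  obtains b where "b \<in> \<A>" "normA \<A> w = L2_set w b"
proof -
  have "normA \<A> w \<in> (\<lambda>A. L2_set w A) ` \<A>"
    unfolding normA_eq_SUP using assms by (simp add: cSup_eq_Max)
  then show ?thesis
    using that by blast
qed

lemma norm2_near:
  assumes near: "\<And>G. finite G \<Longrightarrow> \<bar>L2_set w G - L2_set u G\<bar> \<le> d"
    and "finite S" "\<And>a. a \<notin> S \<Longrightarrow> u a = 0"
  shows "\<bar>norm2 w - L2_set u S\<bar> \<le> d"
proof -
  have bound: "L2_set w G \<le> L2_set u S + d" if "finite G" for G
    using near[OF that] L2_set_le_support[of S u G, OF assms(2,3)] by linarith
  have "norm2 w \<le> L2_set u S + d"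
    using bound by (rule norm2_le)
  moreover have "L2_set u S - d \<le> norm2 w"
    using near[OF assms(2)] L2_set_le_norm2[OF bound assms(2)] by linarith
  ultimately show ?thesis
    by linarith
qed

lemma normA_near:
  assumes near: "\<And>G. finite G \<Longrightarrow> \<bar>L2_set w G - L2_set u G\<bar> \<le> d"
    and "finite S" "\<And>a. a \<notin> S \<Longrightarrow> u a = 0" "\<A> \<noteq> {}"
  shows "\<bar>normA \<A> w - normA \<A> u\<bar> \<le> d"
proof -
  have near_all: "\<bar>L2_set w b - L2_set u b\<bar> \<le> d" for b
    using near[of b] near[of "{}"] by (cases "finite b") auto
  have u_bound: "L2_set u b \<le> L2_set u S" for b
    using L2_set_le_support[of S u b, OF assms(2,3)] .
  have w_bound: "L2_set w b \<le> L2_set u S + d" for b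
    using near_all[of b] u_bound[of b] by linarith
  have "normA \<A> w \<le> normA \<A> u + d"
  proof (rule normA_le[OF assms(4)])
    fix b assume "b \<in> \<A>"
    then show "L2_set w b \<le> normA \<A> u + d"
      using near_all[of b] L2_set_le_normA[OF u_bound] by fastforce
  qed
  moreover have "normA \<A> u \<le> normA \<A> w + d"
  proof (rule normA_le[OF assms(4)])
    fix b assume "b \<in> \<A>"
    then show "L2_set u b \<le> normA \<A> w + d"
      using near_all[of b] L2_set_le_normA[OF w_bound] by fastforce
  qed
  ultimately show ?thesis
    by linarith
qed

definition split_pair ::
  "real \<Rightarrow> 'a set \<Rightarrow> ('a \<Rightarrow> real) \<Rightarrow> 'a set \<Rightarrow> ('a \<Rightarrow> real) \<Rightarrow> 'a set \<Rightarrow> bool" where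
  "split_pair e R y1 A1 y2 A2 \<longleftrightarrow>
     concentrated_on y1 (R \<union> A1) e \<and> concentrated_on y2 (R \<union> A2) e \<and>
     R \<inter> A1 = {} \<and> R \<inter> A2 = {} \<and> A1 \<inter> A2 = {} \<and> L2_set (y1 - y2) R \<le> e"

lemma split_pair_finite:
  "split_pair e R y1 A1 y2 A2 \<Longrightarrow> finite R \<and> finite A1 \<and> finite A2"
  unfolding split_pair_def concentrated_on_def by simp

text \<open>Off the common root \<open>R\<close>, \<open>y1 - y2\<close> is \<open>y1\<close> on \<open>A1\<close>, \<open>-y2\<close> on \<open>A2\<close>, plus two tails
  of size at most \<open>e\<close> each; on \<open>R\<close> it has size at most \<open>e\<close>.\<close>

lemma L2_set_diff_near_split:
  assumes "split_pair e R y1 A1 y2 A2" "finite G"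
  shows "\<bar>L2_set (y1 - y2) G - L2_set (restrict_zero y1 A1 - restrict_zero y2 A2) G\<bar> \<le> 3 * e"
proof -
  note pair = assms(1)[unfolded split_pair_def]
  define r1 where "r1 = restrict_zero (y1 - y2) R"
  define r2 where "r2 = restrict_zero y1 (- (R \<union> A1))"
  define r3 where "r3 = restrict_zero (\<lambda>a. - y2 a) (- (R \<union> A2))"
  define u where "u = restrict_zero y1 A1 - restrict_zero y2 A2"
  have decomp: "(y1 - y2) a = u a + (r1 a + (r2 a + r3 a))" for a
    using pair unfolding u_def r1_def r2_def r3_def restrict_zero_def by auto
  have "L2_set r1 G \<le> e"
  proof -
    have "L2_set r1 G = L2_set (y1 - y2) (G \<inter> R)"
      unfolding r1_def by (rule L2_set_restrict_zero[OF assms(2)])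
    also have "\<dots> \<le> L2_set (y1 - y2) R"
      using split_pair_finite[OF assms(1)] by (intro L2_set_subset_le) auto
    finally show ?thesis
      using pair by linarith
  qed
  moreover have "L2_set r2 G \<le> e"
    using concentrated_onD[of y1 "R \<union> A1" e G] pair assms(2)
    unfolding r2_def L2_set_restrict_zero[OF assms(2)] by (simp add: Diff_eq)
  moreover have "L2_set r3 G \<le> e"
    using concentrated_onD[of y2 "R \<union> A2" e G] pair assms(2)
    unfolding r3_def L2_set_restrict_zero[OF assms(2)] by (simp add: Diff_eq)
  moreover have "L2_set (\<lambda>a. r1 a + (r2 a + r3 a)) G \<le> L2_set r1 G + L2_set r2 G + L2_set r3 G"
    using L2_set_triangle_ineq[of r1 "\<lambda>a. r2 a + r3 a" G] L2_set_triangle_ineq[of r2 r3 G]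
    by linarith
  moreover have "L2_set (y1 - y2) G = L2_set (\<lambda>a. u a + (r1 a + (r2 a + r3 a))) G"
    using decomp by (intro L2_set_cong) auto
  ultimately show ?thesis
    using L2_set_add_diff_le[of u "\<lambda>a. r1 a + (r2 a + r3 a)" G] unfolding u_def by linarith
qed

lemma L2_set_split_parts:
  assumes "A1 \<inter> A2 = {}" "finite b1" "finite b2" "b1 \<subseteq> A1" "b2 \<subseteq> A2"
  shows "L2_set (restrict_zero y1 A1 - restrict_zero y2 A2) (b1 \<union> b2)
    = sqrt ((L2_set y1 b1)\<^sup>2 + (L2_set y2 b2)\<^sup>2)"
proof -
  let ?u = "restrict_zero y1 A1 - restrict_zero y2 A2"
  have "L2_set ?u b1 = L2_set y1 b1"
    using assms by (intro L2_set_cong) (auto simp: restrict_zero_def)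
  moreover have "L2_set ?u b2 = L2_set (\<lambda>a. - y2 a) b2"
    using assms by (intro L2_set_cong) (auto simp: restrict_zero_def)
  moreover have "b1 \<inter> b2 = {}"
    using assms by blast
  ultimately show ?thesis
    using assms(2,3) by (simp add: L2_set_Un_disjoint)
qed

lemma norm2_diff_near_split:
  assumes "split_pair e R y1 A1 y2 A2"
  shows "\<bar>norm2 (y1 - y2) - sqrt ((L2_set y1 A1)\<^sup>2 + (L2_set y2 A2)\<^sup>2)\<bar> \<le> 3 * e"
proof -
  have fin: "finite A1" "finite A2" and disj: "A1 \<inter> A2 = {}"
    using assms split_pair_finite unfolding split_pair_def by blast+
  have "\<bar>norm2 (y1 - y2) - L2_set (restrict_zero y1 A1 - restrict_zero y2 A2) (A1 \<union> A2)\<bar> \<le> 3 * e"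
    using L2_set_diff_near_split[OF assms] fin
    by (intro norm2_near) (auto simp: restrict_zero_def)
  then show ?thesis
    using L2_set_split_parts[OF disj fin] by simp
qed

lemma normA_diff_near_split:
  assumes "split_pair e R y1 A1 y2 A2" "\<A> \<noteq> {}"
  shows "\<bar>normA \<A> (y1 - y2) - normA \<A> (restrict_zero y1 A1 - restrict_zero y2 A2)\<bar> \<le> 3 * e"
  using L2_set_diff_near_split[OF assms(1)] split_pair_finite[OF assms(1)] assms(2)
  by (intro normA_near[where S="A1 \<union> A2"]) (auto simp: restrict_zero_def)

lemma norm2A_le_if_split_pair_empty:
  assumes "split_pair e R y1 {} y2 {}" "\<A> \<noteq> {}"
  shows "norm2A \<A> (y1 - y2) \<le> 6 * e"
proof -
  have "restrict_zero y1 {} - restrict_zero y2 {} = (\<lambda>_. 0)"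
    by (auto simp: restrict_zero_def)
  moreover have "normA \<A> (\<lambda>_. 0) = 0"
    using assms(2) by (simp add: normA_eq_SUP L2_set_def)
  ultimately show ?thesis
    using norm2_diff_near_split[OF assms(1)] normA_diff_near_split[OF assms]
    unfolding norm2A_def by simp
qed

lemma uncountable_fibre:
  assumes "uncountable U" "countable (h ` U)"
  obtains v where "uncountable {k \<in> U. h k = v}"
proof -
  have "U = (\<Union>v\<in>h ` U. {k \<in> U. h k = v})"
    by blast
  moreover have "countable (\<Union>v\<in>h ` U. {k \<in> U. h k = v})"
    if "\<And>v. countable {k \<in> U. h k = v}"
    using assms(2) that by blast
  ultimately have "\<exists>v. uncountable {k \<in> U. h k = v}"
    using assms(1) by auto
  then show ?thesis
    using that by blast
qed

lemma floor_divide_eq_imp_dist_less: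
  fixes x x' h :: real
  assumes "h > 0" "\<lfloor>x / h\<rfloor> = \<lfloor>x' / h\<rfloor>"
  shows "\<bar>x - x'\<bar> < h"
proof -
  have "\<bar>x / h - x' / h\<bar> < 1"
    using floor_correct[of "x / h"] floor_correct[of "x' / h"] assms(2) by linarith
  then show ?thesis
    using assms(1) by (simp add: diff_divide_distrib[symmetric] abs_divide)
qed

lemma uncountable_subset_close:
  fixes f :: "'k \<Rightarrow> 'b \<Rightarrow> real"
  assumes "uncountable U" "finite B" "e > 0"
  obtains U' where "U' \<subseteq> U" "uncountable U'"
    "\<And>k k' b. k \<in> U' \<Longrightarrow> k' \<in> U' \<Longrightarrow> b \<in> B \<Longrightarrow> \<bar>f k b - f k' b\<bar> < e"
proof -
  define key where "key k = (\<lambda>b\<in>B. \<lfloor>f k b / e\<rfloor>)" for k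
  have "key ` U \<subseteq> PiE B (\<lambda>_. UNIV)"
    unfolding key_def by auto
  then have "countable (key ` U)"
    using countable_PiE[OF assms(2), of "\<lambda>_. UNIV :: int set"] countable_subset by auto
  then obtain v where v: "uncountable {k \<in> U. key k = v}"
    using uncountable_fibre[OF assms(1)] by blast
  have "\<lfloor>f k b / e\<rfloor> = \<lfloor>f k' b / e\<rfloor>" if "key k = key k'" "b \<in> B" for k k' b
    using fun_cong[OF that(1), of b] that(2) unfolding key_def by simp
  then show ?thesis
    using that[of "{k \<in> U. key k = v}"] v floor_divide_eq_imp_dist_less[OF assms(3)] by auto
qed

lemma uncountable_subset_close_real:
  fixes f :: "'k \<Rightarrow> real"
  assumes "uncountable U" "e > 0"
  obtains U' where "U' \<subseteq> U" "uncountable U'"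
    "\<And>k k'. k \<in> U' \<Longrightarrow> k' \<in> U' \<Longrightarrow> \<bar>f k - f k'\<bar> < e"
proof (rule uncountable_subset_close[OF assms(1) _ assms(2), where B="{()}" and f="\<lambda>k _. f k"])
  fix U'
  assume "U' \<subseteq> U" "uncountable U'"
    "\<And>k k' b. k \<in> U' \<Longrightarrow> k' \<in> U' \<Longrightarrow> b \<in> {()} \<Longrightarrow> \<bar>f k - f k'\<bar> < e"
  then show thesis
    by (intro that) auto
qed simp

lemma uncountable_subset_L2_close:
  fixes U :: "('a \<Rightarrow> real) set"
  assumes "uncountable U" "finite R" "e > 0"
  obtains U' where "U' \<subseteq> U" "uncountable U'"
    "\<And>y y'. y \<in> U' \<Longrightarrow> y' \<in> U' \<Longrightarrow> L2_set (y - y') R \<le> e"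
proof -
  define h where "h = e / (card R + 1)"
  have h: "h > 0"
    unfolding h_def using assms(3) by simp
  obtain U' where U': "U' \<subseteq> U" "uncountable U'"
    and close: "\<And>y y' a. y \<in> U' \<Longrightarrow> y' \<in> U' \<Longrightarrow> a \<in> R \<Longrightarrow> \<bar>y a - y' a\<bar> < h"
    using uncountable_subset_close[OF assms(1,2) h, of "\<lambda>y a. y a"] by blast
  have "L2_set (y - y') R \<le> e" if "y \<in> U'" "y' \<in> U'" for y y'
  proof -
    have "L2_set (y - y') R = L2_set (\<lambda>a. \<bar>y a - y' a\<bar>) R"
      unfolding L2_set_def by simp
    also have "\<dots> \<le> L2_set (\<lambda>_. h) R"
      using close[OF that] by (intro L2_set_mono) (auto simp: less_imp_le)
    also have "\<dots> = sqrt (card R) * h"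
      using h by (simp add: L2_set_constant)
    also have "\<dots> \<le> (card R + 1) * h"
    proof -
      have "sqrt (card R) \<le> sqrt ((card R + 1)\<^sup>2)"
        by (intro real_sqrt_le_mono) (simp add: power2_eq_square)
      then show ?thesis
        using h by (intro mult_right_mono) auto
    qed
    also have "\<dots> = e"
      unfolding h_def by simp
    finally show ?thesis .
  qed
  with U' that show ?thesis
    by blast
qed

lemma uncountable_two_points:
  assumes "uncountable U"
  obtains x y where "x \<in> U" "y \<in> U" "x \<noteq> y"
proof -
  have not_sub: "\<not> U \<subseteq> {x}" for x
    using assms countable_subset[of U "{x}"] by auto
  then obtain x where "x \<in> U"
    by blast
  moreover obtain y where "y \<in> U" "y \<noteq> x"
    using not_sub[of x] by blast
  ultimately show ?thesis
    using that by blast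
qed

lemma uncountable_inj_on_avoiding_finite:
  assumes "uncountable V" "inj_on \<alpha> V" "finite R"
  shows "uncountable {y \<in> V. \<alpha> y \<notin> R}"
proof
  have "finite {y \<in> V. \<alpha> y \<in> R}"
  proof (rule finite_imageD)
    show "finite (\<alpha> ` {y \<in> V. \<alpha> y \<in> R})"
      by (rule finite_subset[OF _ assms(3)]) blast
    show "inj_on \<alpha> {y \<in> V. \<alpha> y \<in> R}"
      by (rule inj_on_subset[OF assms(2)]) blast
  qed
  moreover assume "countable {y \<in> V. \<alpha> y \<notin> R}"
  ultimately have "countable ({y \<in> V. \<alpha> y \<notin> R} \<union> {y \<in> V. \<alpha> y \<in> R})"
    using countable_finite countable_Un by blast
  moreover have "{y \<in> V. \<alpha> y \<notin> R} \<union> {y \<in> V. \<alpha> y \<in> R} = V"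
    by blast
  ultimately show False
    using assms(1) by simp
qed

lemma disjoint_family_on_Union_chain:
  assumes "\<And>V. V \<in> C \<Longrightarrow> disjoint_family_on F V"
    and "\<And>V W. V \<in> C \<Longrightarrow> W \<in> C \<Longrightarrow> V \<subseteq> W \<or> W \<subseteq> V"
  shows "disjoint_family_on F (\<Union>C)"
  unfolding disjoint_family_on_def
proof (intro ballI impI)
  fix m n assume mn: "m \<in> \<Union>C" "n \<in> \<Union>C" "m \<noteq> n"
  then obtain V W where VW: "V \<in> C" "W \<in> C" "m \<in> V" "n \<in> W"
    by blast
  then obtain X where "X \<in> C" "m \<in> X" "n \<in> X"
    using assms(2)[OF VW(1,2)] by blast
  then show "F m \<inter> F n = {}"
    using assms(1) mn(3) disjoint_family_onD by metis
qed

text \<open>A maximal disjoint subfamily (Zorn) is uncountable: a countable one meets only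
  countably many of the sets.\<close>

lemma uncountable_disjoint_subfamily:
  assumes "uncountable U" "\<And>k. k \<in> U \<Longrightarrow> finite (F k)" "\<And>p. countable {k \<in> U. p \<in> F k}"
  obtains V where "V \<subseteq> U" "uncountable V" "disjoint_family_on F V"
proof -
  define \<D> where "\<D> = {V. V \<subseteq> U \<and> disjoint_family_on F V}"
  have "\<Union>C \<in> \<D>" if chain: "C \<in> chains \<D>" for C
    using chainsD[OF chain] chainsD2[OF chain] disjoint_family_on_Union_chain[of C F]
    unfolding \<D>_def by blast
  then obtain M where M: "M \<in> \<D>" and max: "\<And>V. V \<in> \<D> \<Longrightarrow> M \<subseteq> V \<Longrightarrow> V = M"
    using Zorn_Lemma[of \<D>] by blast
  have "uncountable M"
  proof
    assume "countable M"
    let ?B = "M \<union> (\<Union>p\<in>(\<Union>m\<in>M. F m). {k \<in> U. p \<in> F k})"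
    have "countable (\<Union>m\<in>M. F m)"
      by (rule countable_UN[OF \<open>countable M\<close>])
        (use M assms(2) in \<open>auto simp: \<D>_def intro: countable_finite\<close>)
    then have "countable ?B"
      using \<open>countable M\<close> assms(3) by blast
    then have "\<not> U \<subseteq> ?B"
      using assms(1) countable_subset by blast
    then obtain k where k: "k \<in> U" "k \<notin> ?B"
      by blast
    then have "F k \<inter> (\<Union>m\<in>M. F m) = {}" "k \<notin> M"
      by blast+
    then have "insert k M \<in> \<D>"
      using M k(1) unfolding \<D>_def by (simp add: disjoint_family_on_insert)
    then show False
      using max[of "insert k M"] k by blast
  qed
  with M that show ?thesis
    unfolding \<D>_def by blast
qed

lemma delta_system_card:
  assumes "uncountable U" "\<And>k. k \<in> U \<Longrightarrow> finite (F k) \<and> card (F k) = n"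
  obtains V R where "V \<subseteq> U" "uncountable V" "\<And>k. k \<in> V \<Longrightarrow> R \<subseteq> F k"
    "disjoint_family_on (\<lambda>k. F k - R) V"
  using assms
proof (induction n arbitrary: U F thesis)
  case 0
  then have "F k = {}" if "k \<in> U" for k
    using "0.prems"(3)[OF that] card_0_eq by blast
  then have "disjoint_family_on (\<lambda>k. F k - {}) U"
    by (simp add: disjoint_family_on_def)
  with "0.prems"(1)[of U "{}"] "0.prems"(2) show ?case
    by blast
next
  case (Suc n)
  show ?case
  proof (cases "\<exists>p. uncountable {k \<in> U. p \<in> F k}")
    case True
    then obtain p where p: "uncountable {k \<in> U. p \<in> F k}"
      by blast
    obtain V R where V: "V \<subseteq> {k \<in> U. p \<in> F k}" "uncountable V" "\<And>k. k \<in> V \<Longrightarrow> R \<subseteq> F k - {p}"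
      and disj: "disjoint_family_on (\<lambda>k. F k - {p} - R) V"
      by (rule Suc.IH[where U="{k \<in> U. p \<in> F k}" and F="\<lambda>k. F k - {p}"])
        (use p Suc.prems(3) in auto)
    have "F k - {p} - R = F k - insert p R" for k
      by blast
    with V disj show ?thesis
      by (intro Suc.prems(1)[of V "insert p R"]) auto
  next
    case False
    show ?thesis
    proof (rule uncountable_disjoint_subfamily[OF Suc.prems(2), of F])
      fix V
      assume "V \<subseteq> U" "uncountable V" "disjoint_family_on F V"
      then show thesis
        by (intro Suc.prems(1)[of V "{}"]) auto
    qed (use False Suc.prems(3) in auto)
  qed
qed

lemma delta_system:
  assumes "uncountable U" "\<And>k. k \<in> U \<Longrightarrow> finite (F k)"
  obtains V R where "V \<subseteq> U" "uncountable V" "\<And>k. k \<in> V \<Longrightarrow> R \<subseteq> F k"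
    "disjoint_family_on (\<lambda>k. F k - R) V"
proof -
  have "countable ((\<lambda>k. card (F k)) ` U)"
    by simp
  then obtain n where n: "uncountable {k \<in> U. card (F k) = n}"
    using uncountable_fibre[OF assms(1)] by blast
  show ?thesis
  proof (rule delta_system_card[OF n, of F])
    fix V R
    assume "V \<subseteq> {k \<in> U. card (F k) = n}" "uncountable V" "\<And>k. k \<in> V \<Longrightarrow> R \<subseteq> F k"
      "disjoint_family_on (\<lambda>k. F k - R) V"
    then show thesis
      by (intro that) auto
  qed (use assms(2) in auto)
qed

lemma omega1_like_inj_into:
  fixes X :: "'b set"
  assumes "omega1_like TYPE('a::wellorder)" "uncountable X"
  obtains g :: "'a::wellorder \<Rightarrow> 'b" where "inj g" "range g \<subseteq> X"
proof -
  define step where "step h \<xi> = (SOME x. x \<in> X \<and> x \<notin> h ` {\<beta>. \<beta> < \<xi>})"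
    for h :: "'a \<Rightarrow> 'b" and \<xi>
  define g where "g = wfrec {(x, y). x < y} step"
  have g: "g \<xi> \<in> X \<and> g \<xi> \<notin> g ` {\<beta>. \<beta> < \<xi>}" for \<xi>
  proof -
    have "g \<xi> = step (cut g {(x, y). x < y} \<xi>) \<xi>"
      by (rule def_wfrec[OF g_def[THEN eq_reflection] wf])
    moreover have "cut g {(x, y). x < y} \<xi> ` {\<beta>. \<beta> < \<xi>} = g ` {\<beta>. \<beta> < \<xi>}"
      by (auto simp: cut_apply)
    moreover have "countable (g ` {\<beta>. \<beta> < \<xi>})"
      using assms(1) unfolding omega1_like_def by blast
    then have "\<exists>x. x \<in> X \<and> x \<notin> g ` {\<beta>. \<beta> < \<xi>}"
      using assms(2) countable_subset by (metis subsetI)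
    ultimately show ?thesis
      unfolding step_def by (metis (mono_tags, lifting) someI_ex)
  qed
  have "inj g"
  proof (rule injI)
    fix \<xi> \<eta> assume "g \<xi> = g \<eta>"
    with g[of \<xi>] g[of \<eta>] show "\<xi> = \<eta>"
      by (metis linorder_neqE mem_Collect_eq rev_image_eqI)
  qed
  with g that show ?thesis
    by blast
qed

lemma strong_T_coloring_pairs:
  fixes c :: "'a::wellorder set \<Rightarrow> 'i::zero_neq_one \<times> 'j" and A :: "'k \<Rightarrow> 'a set"
  assumes "omega1_like TYPE('a)" "strong_T_coloring c I J" "uncountable U"
    "\<And>k. k \<in> U \<Longrightarrow> finite (A k) \<and> A k \<noteq> {}" "disjoint_family_on A U"
  shows "\<exists>k\<in>U. \<exists>k'\<in>U. k \<noteq> k' \<and> (fst \<circ> c) ` otimes (A k) (A k') = {0}"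
    and "\<exists>k\<in>U. \<exists>k'\<in>U. k \<noteq> k' \<and> (fst \<circ> c) ` otimes (A k) (A k') = {1}"
proof -
  obtain g :: "'a \<Rightarrow> 'k" where g: "inj g" "range g \<subseteq> U"
    using omega1_like_inj_into[OF assms(1,3)] .
  have "\<forall>\<xi>. finite (A (g \<xi>)) \<and> A (g \<xi>) \<noteq> {}"
    using assms(4) g(2) by blast
  moreover have "\<forall>\<xi> \<eta>. \<xi> \<noteq> \<eta> \<longrightarrow> A (g \<xi>) \<inter> A (g \<eta>) = {}"
    using assms(5) g unfolding disjoint_family_on_def by (metis injD range_subsetD)
  ultimately have "(\<exists>\<xi> \<eta>. \<xi> < \<eta> \<and> (fst \<circ> c) ` otimes (A (g \<xi>)) (A (g \<eta>)) = {0}) \<and>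
      (\<exists>\<xi> \<eta>. \<xi> < \<eta> \<and> (fst \<circ> c) ` otimes (A (g \<xi>)) (A (g \<eta>)) = {1})"
    using assms(2)[unfolded strong_T_coloring_def, THEN conjunct2, rule_format, of "\<lambda>\<xi>. A (g \<xi>)"]
    by blast
  then show "\<exists>k\<in>U. \<exists>k'\<in>U. k \<noteq> k' \<and> (fst \<circ> c) ` otimes (A k) (A k') = {0}"
    and "\<exists>k\<in>U. \<exists>k'\<in>U. k \<noteq> k' \<and> (fst \<circ> c) ` otimes (A k) (A k') = {1}"
    using g by (metis injD less_irrefl range_subsetD)+
qed

lemma mem_pairs2_iff: "p \<in> pairs2 S \<longleftrightarrow> (\<exists>x y. x \<noteq> y \<and> x \<in> S \<and> y \<in> S \<and> p = {x, y})"
  unfolding pairs2_def by (auto simp: card_2_iff)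

lemma T0_family_iff:
  "b \<in> T0_family c \<longleftrightarrow> finite b \<and> (\<forall>x\<in>b. \<forall>y\<in>b. x \<noteq> y \<longrightarrow> fst (c {x, y}) = 0)"
proof -
  have "(fst \<circ> c) ` pairs2 b \<subseteq> {0} \<longleftrightarrow> (\<forall>x\<in>b. \<forall>y\<in>b. x \<noteq> y \<longrightarrow> fst (c {x, y}) = 0)"
    unfolding image_subset_iff Ball_def mem_pairs2_iff by auto
  then show ?thesis
    unfolding T0_family_def by blast
qed

lemma T0_family_finite: "b \<in> T0_family c \<Longrightarrow> finite b"
  by (simp add: T0_family_iff)

lemma empty_in_T0_family: "{} \<in> T0_family c"
  by (simp add: T0_family_iff)

lemma singleton_in_T0_family: "{a} \<in> T0_family c"
  by (simp add: T0_family_iff)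

lemma T0_family_subset: "b \<in> T0_family c \<Longrightarrow> b' \<subseteq> b \<Longrightarrow> b' \<in> T0_family c"
  unfolding T0_family_iff by (auto intro: finite_subset)

lemma colour_otimes:
  assumes "(fst \<circ> c) ` otimes A1 A2 = {i}" "x \<in> A1" "y \<in> A2"
  shows "fst (c {x, y}) = i"
proof -
  have "{x, y} \<in> otimes A1 A2"
    using assms(2,3) unfolding otimes_def by blast
  with assms(1) show ?thesis
    by (metis comp_apply image_eqI singletonD)
qed

lemma T0_family_Un_colour0:
  assumes "b1 \<in> T0_family c" "b2 \<in> T0_family c" "b1 \<subseteq> A1" "b2 \<subseteq> A2"
    "(fst \<circ> c) ` otimes A1 A2 = {0}"
  shows "b1 \<union> b2 \<in> T0_family c"
proof -
  have cross: "fst (c {x, y}) = 0" if "x \<in> b1" "y \<in> b2" for x y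
    using colour_otimes[OF assms(5)] assms(3,4) that by blast
  have "fst (c {x, y}) = 0" if xy: "x \<in> b1 \<union> b2" "y \<in> b1 \<union> b2" "x \<noteq> y" for x y
  proof -
    consider "x \<in> b1" "y \<in> b1" | "x \<in> b2" "y \<in> b2" | "x \<in> b1" "y \<in> b2" | "y \<in> b1" "x \<in> b2"
      using xy(1,2) by blast
    then show ?thesis
    proof cases
      case 4
      then show ?thesis
        using cross[of y x] by (simp add: insert_commute)
    qed (use cross assms(1,2) xy(3) in \<open>auto simp: T0_family_iff\<close>)
  qed
  then show ?thesis
    using assms(1,2) unfolding T0_family_iff by blast
qed

lemma T0_family_colour1_separates:
  assumes "b \<in> T0_family c" "(fst \<circ> c) ` otimes A1 A2 = {1}" "A1 \<inter> A2 = {}"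
  shows "b \<inter> A1 = {} \<or> b \<inter> A2 = {}"
proof (rule ccontr)
  assume "\<not> ?thesis"
  then obtain x y where xy: "x \<in> b" "x \<in> A1" "y \<in> b" "y \<in> A2"
    by blast
  moreover have "x \<noteq> y"
    using xy(2,4) assms(3) by blast
  ultimately have "fst (c {x, y}) = 0"
    using assms(1) unfolding T0_family_iff by blast
  moreover have "fst (c {x, y}) = 1"
    using colour_otimes[OF assms(2) xy(2,4)] .
  ultimately show False
    by simp
qed

lemma normA_split_parts_ge:
  assumes "A1 \<inter> A2 = {}" "finite A1" "finite A2" "b1 \<subseteq> A1" "b2 \<subseteq> A2" "b1 \<union> b2 \<in> \<A>"
  shows "sqrt ((L2_set y1 b1)\<^sup>2 + (L2_set y2 b2)\<^sup>2)
    \<le> normA \<A> (restrict_zero y1 A1 - restrict_zero y2 A2)"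
proof -
  let ?u = "restrict_zero y1 A1 - restrict_zero y2 A2"
  have "L2_set ?u b \<le> L2_set ?u (A1 \<union> A2)" for b
    using assms(2,3) by (intro L2_set_le_support) (auto simp: restrict_zero_def)
  then have "L2_set ?u (b1 \<union> b2) \<le> normA \<A> ?u"
    using assms(6) by (rule L2_set_le_normA)
  moreover have "finite b1" "finite b2"
    using assms(2-5) finite_subset by blast+
  ultimately show ?thesis
    using L2_set_split_parts[OF assms(1) _ _ assms(4,5)] by simp
qed

lemma normA_split_parts_le:
  assumes "A1 \<inter> A2 = {}" "finite A1" "finite A2" "\<A> \<noteq> {}"
    and fin: "\<And>b. b \<in> \<A> \<Longrightarrow> finite b"
    and down: "\<And>b b'. b \<in> \<A> \<Longrightarrow> b' \<subseteq> b \<Longrightarrow> b' \<in> \<A>"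
    and sep: "\<And>b. b \<in> \<A> \<Longrightarrow> b \<inter> A1 = {} \<or> b \<inter> A2 = {}"
  shows "normA \<A> (restrict_zero y1 A1 - restrict_zero y2 A2)
    \<le> max (normA (\<A> \<inter> Pow A1) y1) (normA (\<A> \<inter> Pow A2) y2)"
proof (rule normA_le[OF assms(4)])
  fix b assume b: "b \<in> \<A>"
  let ?u = "restrict_zero y1 A1 - restrict_zero y2 A2"
  have part_le: "L2_set y (b \<inter> A) \<le> normA (\<A> \<inter> Pow A) y" if "finite A" for y A
    using that b down by (intro L2_set_le_normA_finite) auto
  show "L2_set ?u b \<le> max (normA (\<A> \<inter> Pow A1) y1) (normA (\<A> \<inter> Pow A2) y2)"
  proof (cases "b \<inter> A2 = {}")
    case True
    then have "L2_set ?u b = L2_set (restrict_zero y1 A1) b"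
      by (intro L2_set_cong) (auto simp: restrict_zero_def)
    then show ?thesis
      using part_le[OF assms(2), of y1] L2_set_restrict_zero[OF fin[OF b]] by simp
  next
    case False
    then have "b \<inter> A1 = {}"
      using sep[OF b] by blast
    then have "L2_set ?u b = L2_set (restrict_zero (\<lambda>a. - y2 a) A2) b"
      by (intro L2_set_cong) (auto simp: restrict_zero_def)
    then show ?thesis
      using part_le[OF assms(3), of y2] L2_set_restrict_zero[OF fin[OF b]] by simp
  qed
qed

lemma sqrt_sum_squares_ge:
  fixes x1 x2 t :: real
  assumes "0 \<le> x1" "0 \<le> x2" "t \<le> x1" "t \<le> x2"
  shows "sqrt 2 * t \<le> sqrt (x1\<^sup>2 + x2\<^sup>2)"
proof (cases "t \<le> 0")
  case True
  then have "sqrt 2 * t \<le> 0"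
    by (simp add: mult_nonneg_nonpos)
  moreover have "0 \<le> sqrt (x1\<^sup>2 + x2\<^sup>2)"
    by simp
  ultimately show ?thesis
    by linarith
next
  case False
  then have "t\<^sup>2 \<le> x1\<^sup>2" "t\<^sup>2 \<le> x2\<^sup>2"
    using assms by (auto intro: power_mono)
  then have "2 * t\<^sup>2 \<le> x1\<^sup>2 + x2\<^sup>2"
    by simp
  then have "sqrt (2 * t\<^sup>2) \<le> sqrt (x1\<^sup>2 + x2\<^sup>2)"
    by (rule real_sqrt_le_mono)
  with False show ?thesis
    by (simp add: real_sqrt_mult)
qed

lemma sqrt_sum_squares_le:
  fixes x1 x2 t :: real
  assumes "0 \<le> x1" "0 \<le> x2" "x1 \<le> t" "x2 \<le> t"
  shows "sqrt (x1\<^sup>2 + x2\<^sup>2) \<le> sqrt 2 * t"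
proof -
  have "x1\<^sup>2 \<le> t\<^sup>2" "x2\<^sup>2 \<le> t\<^sup>2"
    using assms by (auto intro: power_mono)
  then have "x1\<^sup>2 + x2\<^sup>2 \<le> 2 * t\<^sup>2"
    by simp
  then have "sqrt (x1\<^sup>2 + x2\<^sup>2) \<le> sqrt (2 * t\<^sup>2)"
    by (rule real_sqrt_le_mono)
  with assms show ?thesis
    by (simp add: real_sqrt_mult)
qed

lemma sqrt2_gap:
  fixes s m e \<delta> :: real
  assumes "sqrt 2 * (s - e) + sqrt 2 * (m - e) - 6 * e \<le> \<delta>"
    and "\<delta> \<le> sqrt 2 * (s + e) + (m + e) + 6 * e" "0 < e"
  shows "m \<le> 48 * e"
proof (cases "m \<le> 0")
  case False
  then have "1.4 * m \<le> sqrt 2 * m"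
    by (intro mult_right_mono real_le_rsqrt) (auto simp: power2_eq_square)
  moreover have "sqrt 2 * e \<le> 2 * e"
    using sqrt2_less_2 assms(3) by (intro mult_right_mono) auto
  ultimately show ?thesis
    using assms unfolding right_diff_distrib distrib_left by linarith
qed (use assms(3) in simp)

lemma norm2A_T0_colour0_ge:
  assumes pair: "split_pair e R y1 A1 y2 A2" and colour: "(fst \<circ> c) ` otimes A1 A2 = {0}"
    and "t \<le> L2_set y1 A1" "t \<le> L2_set y2 A2"
    and "\<mu> \<le> normA (T0_family c \<inter> Pow A1) y1" "\<mu> \<le> normA (T0_family c \<inter> Pow A2) y2"
  shows "sqrt 2 * t + sqrt 2 * \<mu> - 6 * e \<le> norm2A (T0_family c) (y1 - y2)"
proof -
  have fin: "finite A1" "finite A2" and disj: "A1 \<inter> A2 = {}"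
    using pair split_pair_finite unfolding split_pair_def by blast+
  have fam: "finite (T0_family c \<inter> Pow A)" "T0_family c \<inter> Pow A \<noteq> {}" if "finite A" for A
    using that empty_in_T0_family by auto
  obtain b1 where b1: "b1 \<in> T0_family c \<inter> Pow A1" "normA (T0_family c \<inter> Pow A1) y1 = L2_set y1 b1"
    by (rule normA_finite_attained[OF fam[OF fin(1)]])
  obtain b2 where b2: "b2 \<in> T0_family c \<inter> Pow A2" "normA (T0_family c \<inter> Pow A2) y2 = L2_set y2 b2"
    by (rule normA_finite_attained[OF fam[OF fin(2)]])
  have "b1 \<union> b2 \<in> T0_family c"
    using b1(1) b2(1) colour by (intro T0_family_Un_colour0) auto
  then have "sqrt ((L2_set y1 b1)\<^sup>2 + (L2_set y2 b2)\<^sup>2)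
      \<le> normA (T0_family c) (restrict_zero y1 A1 - restrict_zero y2 A2)"
    using b1(1) b2(1) by (intro normA_split_parts_ge[OF disj fin]) auto
  moreover have "sqrt 2 * \<mu> \<le> sqrt ((L2_set y1 b1)\<^sup>2 + (L2_set y2 b2)\<^sup>2)"
    using assms(5,6) b1(2) b2(2) by (intro sqrt_sum_squares_ge) auto
  moreover have "sqrt 2 * t \<le> sqrt ((L2_set y1 A1)\<^sup>2 + (L2_set y2 A2)\<^sup>2)"
    using assms(3,4) by (intro sqrt_sum_squares_ge) auto
  moreover have "T0_family c \<noteq> {}"
    using empty_in_T0_family by blast
  ultimately show ?thesis
    using normA_diff_near_split[OF pair \<open>T0_family c \<noteq> {}\<close>] norm2_diff_near_split[OF pair]
    unfolding norm2A_def abs_le_iff by linarith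
qed

lemma norm2A_T0_colour1_le:
  assumes pair: "split_pair e R y1 A1 y2 A2" and colour: "(fst \<circ> c) ` otimes A1 A2 = {1}"
    and "L2_set y1 A1 \<le> t" "L2_set y2 A2 \<le> t"
    and "normA (T0_family c \<inter> Pow A1) y1 \<le> \<mu>" "normA (T0_family c \<inter> Pow A2) y2 \<le> \<mu>"
  shows "norm2A (T0_family c) (y1 - y2) \<le> sqrt 2 * t + \<mu> + 6 * e"
proof -
  have fin: "finite A1" "finite A2" and disj: "A1 \<inter> A2 = {}"
    using pair split_pair_finite unfolding split_pair_def by blast+
  have ne: "T0_family c \<noteq> {}"
    using empty_in_T0_family by blast
  have "normA (T0_family c) (restrict_zero y1 A1 - restrict_zero y2 A2)
      \<le> max (normA (T0_family c \<inter> Pow A1) y1) (normA (T0_family c \<inter> Pow A2) y2)"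
    using T0_family_finite T0_family_subset T0_family_colour1_separates[OF _ colour disj]
    by (intro normA_split_parts_le[OF disj fin ne]) blast+
  moreover have "sqrt ((L2_set y1 A1)\<^sup>2 + (L2_set y2 A2)\<^sup>2) \<le> sqrt 2 * t"
    using assms(3,4) by (intro sqrt_sum_squares_le) auto
  ultimately show ?thesis
    using normA_diff_near_split[OF pair ne] norm2_diff_near_split[OF pair] assms(5,6)
    unfolding norm2A_def abs_le_iff by linarith
qed

lemma equilateralE:
  assumes "equilateral N Y"
  obtains \<delta> where "\<delta> > 0" "\<And>y y'. y \<in> Y \<Longrightarrow> y' \<in> Y \<Longrightarrow> y \<noteq> y' \<Longrightarrow> N (y - y') = \<delta>"
  using assms unfolding equilateral_def by blast

lemma equilateral_countable_support:
  assumes "Y \<subseteq> l2" "countable S" "\<And>y a. y \<in> Y \<Longrightarrow> a \<notin> S \<Longrightarrow> y a = 0" "\<A> \<noteq> {}"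
    and "equilateral (norm2A \<A>) Y"
  shows "countable Y"
proof (rule ccontr)
  assume "uncountable Y"
  obtain \<delta> where "\<delta> > 0" and \<delta>: "\<And>y y'. y \<in> Y \<Longrightarrow> y' \<in> Y \<Longrightarrow> y \<noteq> y' \<Longrightarrow> norm2A \<A> (y - y') = \<delta>"
    using assms(5) by (rule equilateralE) blast
  define e where "e = \<delta> / 7"
  have "e > 0"
    unfolding e_def using \<open>\<delta> > 0\<close> by simp
  obtain F where "\<And>y. y \<in> Y \<Longrightarrow> concentrated_on y (F y) e"
    using l2_choose_concentrated[OF assms(1) \<open>e > 0\<close>] by blast
  then have conc: "\<And>y. y \<in> Y \<Longrightarrow> concentrated_on y (F y \<inter> S) e"
    using assms(3) concentrated_on_Int_support by blast
  then have "(\<lambda>y. F y \<inter> S) ` Y \<subseteq> {R. finite R \<and> R \<subseteq> S}"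
    unfolding concentrated_on_def by blast
  then have "countable ((\<lambda>y. F y \<inter> S) ` Y)"
    using countable_Collect_finite_subset[OF assms(2)] countable_subset by blast
  then obtain R where R: "uncountable {y \<in> Y. F y \<inter> S = R}"
    using uncountable_fibre[OF \<open>uncountable Y\<close>] by blast
  then obtain y0 where "y0 \<in> {y \<in> Y. F y \<inter> S = R}"
    by (rule uncountable_two_points)
  then have "y0 \<in> Y" "F y0 \<inter> S = R"
    by auto
  then have "finite R"
    using conc unfolding concentrated_on_def by blast
  obtain U where U: "U \<subseteq> {y \<in> Y. F y \<inter> S = R}" "uncountable U"
    and close: "\<And>y y'. y \<in> U \<Longrightarrow> y' \<in> U \<Longrightarrow> L2_set (y - y') R \<le> e"
    using uncountable_subset_L2_close[OF R \<open>finite R\<close> \<open>e > 0\<close>] by blast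
  obtain y1 y2 where y: "y1 \<in> U" "y2 \<in> U" "y1 \<noteq> y2"
    using uncountable_two_points[OF U(2)] by blast
  have "split_pair e R y1 {} y2 {}"
    using conc close[OF y(1,2)] U(1) y(1,2) unfolding split_pair_def by auto
  then have "norm2A \<A> (y1 - y2) \<le> 6 * e"
    using assms(4) by (rule norm2A_le_if_split_pair_empty)
  moreover have "norm2A \<A> (y1 - y2) = \<delta>"
    using \<delta> U(1) y by blast
  ultimately show False
    using \<open>\<delta> > 0\<close> unfolding e_def by simp
qed

lemma uncountable_large_coordinates:
  assumes "Y \<subseteq> l2" "r > 0" "uncountable {a. \<exists>y\<in>Y. r \<le> \<bar>y a\<bar>}"
  obtains Y' \<alpha> where "Y' \<subseteq> Y" "uncountable Y'" "inj_on \<alpha> Y'"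
    "\<And>y. y \<in> Y' \<Longrightarrow> r \<le> \<bar>y (\<alpha> y)\<bar>"
proof -
  define P where "P = {a. \<exists>y\<in>Y. r \<le> \<bar>y a\<bar>}"
  have "\<forall>a\<in>P. \<exists>y. y \<in> Y \<and> r \<le> \<bar>y a\<bar>"
    unfolding P_def by blast
  then obtain ch where ch: "\<And>a. a \<in> P \<Longrightarrow> ch a \<in> Y \<and> r \<le> \<bar>ch a a\<bar>"
    by metis
  define \<alpha> where "\<alpha> = inv_into P ch"
  have \<alpha>: "\<alpha> y \<in> P" "ch (\<alpha> y) = y" if "y \<in> ch ` P" for y
    unfolding \<alpha>_def using that by (auto simp: inv_into_into f_inv_into_f)
  have "uncountable (ch ` P)"
  proof
    assume "countable (ch ` P)"
    moreover have "finite {a. r \<le> \<bar>y a\<bar>}" if "y \<in> ch ` P" for y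
      using that ch assms(1,2) l2_finite_large_coordinates by blast
    ultimately have "countable (\<Union>y\<in>ch ` P. {a. r \<le> \<bar>y a\<bar>})"
      by (intro countable_UN) (auto intro: countable_finite)
    moreover have "P \<subseteq> (\<Union>y\<in>ch ` P. {a. r \<le> \<bar>y a\<bar>})"
      using ch by blast
    ultimately show False
      using assms(3) countable_subset unfolding P_def by blast
  qed
  moreover have "inj_on \<alpha> (ch ` P)"
    unfolding \<alpha>_def by (rule inj_on_inv_into) simp
  moreover have "r \<le> \<bar>y (\<alpha> y)\<bar>" if "y \<in> ch ` P" for y
    using ch[OF \<alpha>(1)[OF that]] \<alpha>(2)[OF that] by simp
  ultimately show ?thesis
    using that[of "ch ` P" \<alpha>] ch by blast
qed

lemma delta_refinement:
  assumes "Y \<subseteq> l2" "uncountable Y" "inj_on \<alpha> Y" "e > 0"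
  obtains U R A where "U \<subseteq> Y" "uncountable U" "disjoint_family_on A U"
    "\<And>y. y \<in> U \<Longrightarrow> \<alpha> y \<in> A y" "\<And>y. y \<in> U \<Longrightarrow> R \<inter> A y = {}"
    "\<And>y. y \<in> U \<Longrightarrow> concentrated_on y (R \<union> A y) e"
    "\<And>y y'. y \<in> U \<Longrightarrow> y' \<in> U \<Longrightarrow> L2_set (y - y') R \<le> e"
proof -
  obtain F0 where F0: "\<And>y. y \<in> Y \<Longrightarrow> concentrated_on y (F0 y) e"
    using l2_choose_concentrated[OF assms(1,4)] by blast
  define F where "F y = insert (\<alpha> y) (F0 y)" for y
  have F: "concentrated_on y (F y) e" if "y \<in> Y" for y
    using F0[OF that] unfolding F_def by (rule concentrated_on_mono)
      (use F0[OF that] in \<open>auto simp: concentrated_on_def\<close>)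
  then have finF: "finite (F y)" if "y \<in> Y" for y
    using that unfolding concentrated_on_def by blast
  then obtain V R where V: "V \<subseteq> Y" "uncountable V" "\<And>y. y \<in> V \<Longrightarrow> R \<subseteq> F y"
    and disj: "disjoint_family_on (\<lambda>y. F y - R) V"
    using delta_system[OF assms(2)] by blast
  obtain y0 where "y0 \<in> V"
    using uncountable_two_points[OF V(2)] by blast
  then have "finite R"
    using V finF finite_subset by blast
  then have "uncountable {y \<in> V. \<alpha> y \<notin> R}"
    using uncountable_inj_on_avoiding_finite[OF V(2)] inj_on_subset[OF assms(3) V(1)] by blast
  then obtain U where U: "U \<subseteq> {y \<in> V. \<alpha> y \<notin> R}" "uncountable U"
    and close: "\<And>y y'. y \<in> U \<Longrightarrow> y' \<in> U \<Longrightarrow> L2_set (y - y') R \<le> e"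
    using uncountable_subset_L2_close[OF _ \<open>finite R\<close> assms(4)] by blast
  show ?thesis
  proof (rule that[of U "\<lambda>y. F y - R" R])
    show "U \<subseteq> Y" "uncountable U"
      using U V(1) by auto
    show "disjoint_family_on (\<lambda>y. F y - R) U"
      using disjoint_family_on_mono[OF _ disj] U(1) by blast
    fix y assume "y \<in> U"
    then have "y \<in> V" "y \<in> Y" "\<alpha> y \<notin> R"
      using U(1) V(1) by auto
    moreover have "R \<union> (F y - R) = F y"
      using V(3)[OF \<open>y \<in> V\<close>] by blast
    ultimately show "\<alpha> y \<in> F y - R" "R \<inter> (F y - R) = {}" "concentrated_on y (R \<union> (F y - R)) e"
      using F unfolding F_def by auto
  qed (use close in blast)
qed

lemma large_coordinates_refinement:
  fixes \<A> :: "'a set set"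
  assumes "Y \<subseteq> l2" "r > 0" "uncountable {a. \<exists>y\<in>Y. r \<le> \<bar>y a\<bar>}" "e > 0" "\<And>a. {a} \<in> \<A>"
  obtains U R A where "U \<subseteq> Y" "uncountable U" "disjoint_family_on A U"
    "\<And>y. y \<in> U \<Longrightarrow> finite (A y) \<and> A y \<noteq> {}"
    "\<And>y y'. y \<in> U \<Longrightarrow> y' \<in> U \<Longrightarrow> y \<noteq> y' \<Longrightarrow> split_pair e R y (A y) y' (A y')"
    "\<And>y. y \<in> U \<Longrightarrow> r \<le> normA (\<A> \<inter> Pow (A y)) y"
    "\<And>y y'. y \<in> U \<Longrightarrow> y' \<in> U \<Longrightarrow> \<bar>L2_set y (A y) - L2_set y' (A y')\<bar> < e"
    "\<And>y y'. y \<in> U \<Longrightarrow> y' \<in> U \<Longrightarrow> \<bar>normA (\<A> \<inter> Pow (A y)) y - normA (\<A> \<inter> Pow (A y')) y'\<bar> < e"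
proof -
  obtain Y' \<alpha> where Y': "Y' \<subseteq> Y" "uncountable Y'" "inj_on \<alpha> Y'"
    and large: "\<And>y. y \<in> Y' \<Longrightarrow> r \<le> \<bar>y (\<alpha> y)\<bar>"
    using uncountable_large_coordinates[OF assms(1-3)] by blast
  obtain U R A where U: "U \<subseteq> Y'" "uncountable U" and disj: "disjoint_family_on A U"
    and \<alpha>: "\<And>y. y \<in> U \<Longrightarrow> \<alpha> y \<in> A y" and root: "\<And>y. y \<in> U \<Longrightarrow> R \<inter> A y = {}"
    and conc: "\<And>y. y \<in> U \<Longrightarrow> concentrated_on y (R \<union> A y) e"
    and close: "\<And>y y'. y \<in> U \<Longrightarrow> y' \<in> U \<Longrightarrow> L2_set (y - y') R \<le> e"
    by (rule delta_refinement[OF _ Y'(2,3) assms(4)]) (use Y'(1) assms(1) in auto)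
  have finA: "finite (A y)" if "y \<in> U" for y
    using conc[OF that] unfolding concentrated_on_def by blast
  have m_ge: "r \<le> normA (\<A> \<inter> Pow (A y)) y" if "y \<in> U" for y
  proof -
    have "L2_set y {\<alpha> y} \<le> normA (\<A> \<inter> Pow (A y)) y"
      using finA[OF that] \<alpha>[OF that] assms(5) by (intro L2_set_le_normA_finite) auto
    then show ?thesis
      using large[of y] that U(1) by auto
  qed
  obtain U1 where U1: "U1 \<subseteq> U" "uncountable U1"
    and s_close: "\<And>y y'. y \<in> U1 \<Longrightarrow> y' \<in> U1 \<Longrightarrow> \<bar>L2_set y (A y) - L2_set y' (A y')\<bar> < e"
    using uncountable_subset_close_real[OF U(2) assms(4), where f="\<lambda>y. L2_set y (A y)"] by blast
  obtain U2 where U2: "U2 \<subseteq> U1" "uncountable U2"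
    and m_close: "\<And>y y'. y \<in> U2 \<Longrightarrow> y' \<in> U2 \<Longrightarrow>
      \<bar>normA (\<A> \<inter> Pow (A y)) y - normA (\<A> \<inter> Pow (A y')) y'\<bar> < e"
    using uncountable_subset_close_real[OF U1(2) assms(4), where f="\<lambda>y. normA (\<A> \<inter> Pow (A y)) y"]
    by blast
  show ?thesis
  proof (rule that[of U2 A R])
    show "U2 \<subseteq> Y" "uncountable U2"
      using U1(1) U2 U(1) Y'(1) by auto
    show "disjoint_family_on A U2"
      using U1(1) U2(1) by (intro disjoint_family_on_mono[OF _ disj]) auto
    fix y y' assume "y \<in> U2" "y' \<in> U2"
    then have "y \<in> U" "y' \<in> U" "y \<in> U1" "y' \<in> U1"
      using U1(1) U2(1) by blast+
    then show "finite (A y) \<and> A y \<noteq> {}" "r \<le> normA (\<A> \<inter> Pow (A y)) y"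
      "\<bar>L2_set y (A y) - L2_set y' (A y')\<bar> < e"
      using finA \<alpha> m_ge s_close by blast+
    show "y \<noteq> y' \<Longrightarrow> split_pair e R y (A y) y' (A y')"
      using root conc close \<open>y \<in> U\<close> \<open>y' \<in> U\<close> disjoint_family_onD[OF disj]
      unfolding split_pair_def by blast
  qed (use m_close in blast)
qed

lemma T0_equilateral_large_coordinates_countable:
  fixes c :: "'a::wellorder set \<Rightarrow> 'i::zero_neq_one \<times> 'j"
  assumes om: "omega1_like TYPE('a)" and strong: "strong_T_coloring c I J"
    and "Y \<subseteq> l2" "equilateral (norm2A (T0_family c)) Y" "r > 0"
  shows "countable {a. \<exists>y\<in>Y. r \<le> \<bar>y a\<bar>}"
proof (rule ccontr)
  assume "uncountable {a. \<exists>y\<in>Y. r \<le> \<bar>y a\<bar>}"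
  obtain \<delta> where \<delta>: "\<And>y y'. y \<in> Y \<Longrightarrow> y' \<in> Y \<Longrightarrow> y \<noteq> y' \<Longrightarrow> norm2A (T0_family c) (y - y') = \<delta>"
    using assms(4) by (rule equilateralE) blast
  define e where "e = r / 100"
  have "e > 0"
    unfolding e_def using assms(5) by simp
  obtain U R A where U: "U \<subseteq> Y" "uncountable U" "disjoint_family_on A U"
    "\<And>y. y \<in> U \<Longrightarrow> finite (A y) \<and> A y \<noteq> {}"
    and split: "\<And>y y'. y \<in> U \<Longrightarrow> y' \<in> U \<Longrightarrow> y \<noteq> y' \<Longrightarrow> split_pair e R y (A y) y' (A y')"
    and m_ge: "\<And>y. y \<in> U \<Longrightarrow> r \<le> normA (T0_family c \<inter> Pow (A y)) y"
    and s_close: "\<And>y y'. y \<in> U \<Longrightarrow> y' \<in> U \<Longrightarrow> \<bar>L2_set y (A y) - L2_set y' (A y')\<bar> < e"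
    and m_close: "\<And>y y'. y \<in> U \<Longrightarrow> y' \<in> U \<Longrightarrow>
      \<bar>normA (T0_family c \<inter> Pow (A y)) y - normA (T0_family c \<inter> Pow (A y')) y'\<bar> < e"
    by (rule large_coordinates_refinement[OF assms(3,5) _ \<open>e > 0\<close>, where \<A>="T0_family c"])
      (use \<open>uncountable {a. \<exists>y\<in>Y. r \<le> \<bar>y a\<bar>}\<close> singleton_in_T0_family in auto)
  define s where "s y = L2_set y (A y)" for y
  define m where "m y = normA (T0_family c \<inter> Pow (A y)) y" for y
  note pairs = strong_T_coloring_pairs[OF om strong U(2,4,3)]
  obtain y1 y2 where y: "y1 \<in> U" "y2 \<in> U" "y1 \<noteq> y2"
    and y_colour: "(fst \<circ> c) ` otimes (A y1) (A y2) = {0}"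
    using pairs(1) by blast
  obtain z1 z2 where z: "z1 \<in> U" "z2 \<in> U" "z1 \<noteq> z2"
    and z_colour: "(fst \<circ> c) ` otimes (A z1) (A z2) = {1}"
    using pairs(2) by blast
  have "norm2A (T0_family c) (y1 - y2) = \<delta>" "norm2A (T0_family c) (z1 - z2) = \<delta>"
    using \<delta> y z U(1) by auto
  moreover have "s y1 - e \<le> s y2" "m y1 - e \<le> m y2"
    using s_close[OF y(1,2)] m_close[OF y(1,2)] unfolding s_def m_def by auto
  then have "sqrt 2 * (s y1 - e) + sqrt 2 * (m y1 - e) - 6 * e \<le> norm2A (T0_family c) (y1 - y2)"
    using \<open>e > 0\<close> unfolding s_def m_def by (intro norm2A_T0_colour0_ge[OF split[OF y] y_colour]) auto
  moreover have "s z1 \<le> s y1 + e" "s z2 \<le> s y1 + e" "m z1 \<le> m y1 + e" "m z2 \<le> m y1 + e"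
    using s_close[OF z(1) y(1)] s_close[OF z(2) y(1)] m_close[OF z(1) y(1)] m_close[OF z(2) y(1)]
    unfolding s_def m_def by auto
  then have "norm2A (T0_family c) (z1 - z2) \<le> sqrt 2 * (s y1 + e) + (m y1 + e) + 6 * e"
    unfolding s_def m_def by (intro norm2A_T0_colour1_le[OF split[OF z] z_colour])
  ultimately have "m y1 \<le> 48 * e"
    using sqrt2_gap[where s="s y1" and m="m y1" and e=e and \<delta>=\<delta>] \<open>e > 0\<close> by simp
  then show False
    using m_ge[OF y(1)] assms(5) unfolding e_def m_def by linarith
qed

theorem proposition4p5:
  fixes c :: "'a::wellorder set \<Rightarrow> 'i::zero_neq_one \<times> 'j"
    and I :: "'i set" and J :: "'j set"
  assumes "omega1_like TYPE('a)"
    and "strong_T_coloring c I J"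
  shows "\<not> (\<exists>Y \<subseteq> l2. uncountable Y \<and> equilateral (norm2A (T0_family c)) Y)"
proof
  assume "\<exists>Y \<subseteq> l2. uncountable Y \<and> equilateral (norm2A (T0_family c)) Y"
  then obtain Y where Y: "Y \<subseteq> l2" "uncountable Y" "equilateral (norm2A (T0_family c)) Y"
    by blast
  have "uncountable {a. \<exists>y\<in>Y. y a \<noteq> 0}"
  proof
    assume "countable {a. \<exists>y\<in>Y. y a \<noteq> 0}"
    then have "countable Y"
      using empty_in_T0_family by (intro equilateral_countable_support[OF Y(1) _ _ _ Y(3)]) auto
    with Y(2) show False
      by blast
  qed
  moreover have "countable (\<Union>n. {a. \<exists>y\<in>Y. 1 / Suc n \<le> \<bar>y a\<bar>})"
    using T0_equilateral_large_coordinates_countable[OF assms Y(1,3)] by (intro countable_UN) auto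
  ultimately show False
    using countable_subset[OF support_subset_large_coordinates] by blast
qed

end
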